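(* Let $X$ be a spectrally negative Lévy process, $p\ge0$ and $q\in\mathbb R$ with $p+q\ge0$. Then for all $x\in\mathbb R$, $$\int_0^xW^{(p)}(x-z)\mathcal H^{(p,q)}(z)\,\mathrm dz=\int_0^xe^{\Phi(p)(x-z)}W^{(p+q)}(z)\,\mathrm dz,$$ and consequently, for all $a,x\in\mathbb R$, $$\mathcal H^{(p,q)}(x)-q\int_a^xW^{(p)}(x-y)\mathcal H^{(p,q)}(y)\,\mathrm dy=e^{\Phi(p)x}+q\int_0^aW^{(p)}(x-y)\mathcal H^{(p,q)}(y)\,\mathrm dy.$$
   Context: $X=\{X_t,t\ge0\}$ is a spectrally negative Lévy process (no positive jumps) whose paths are not monotone. Laplace exponent: $\psi(\lambda)=\log\mathbb E_0[e^{\lambda X_1}]$, $\lambda\ge0$; $\Phi(q)=\sup\{\lambda\ge0:\psi(\lambda)=q\}$ for $q\ge0$. For $q\ge0$, the $q$-scale function $W^{(q)}$ is $0$ on $(-\infty,0)$ and on $[0,\infty)$ is the continuous function with $\int_0^\infty e^{-\lambda y}W^{(q)}(y)\,\mathrm dy=1/(\psi(\lambda)-q)$ for $\lambda>\Phi(q)$. For $p\ge0$, $q\in\mathbb R$ with $p+q\ge0$ and $x\in\mathbb R$: $\mathcal H^{(p,q)}(x)=e^{\Phi(p)x}\big[1+q\int_0^xe^{-\Phi(p)z}W^{(p+q)}(z)\,\mathrm dz\big]$. Integrals $\int_u^v$ with $v<u$ are oriented: $\int_u^v=-\int_v^u$. *)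

theory Defs
  imports "HOL-Analysis.Analysis"
begin

text \<open>Spectrally negative Levy processes are described through their Levy-Khintchine
  triplet (gamma, sigma, Lm): the Levy measure Lm lives on the negative half-line and
  integrates min 1 (x^2).  The Laplace exponent psi(lambda) = log E[exp(lambda X_1)] is
  then given for lambda >= 0 by the Levy-Khintchine formula below.\<close>

definition levy_measure_sn :: "real measure \<Rightarrow> bool" where
  "levy_measure_sn Lm \<longleftrightarrow> sets Lm = sets borel \<and> emeasure Lm {0..} = 0 \<and>
     integrable Lm (\<lambda>x. min 1 (x^2))"

definition laplace_exp :: "real \<Rightarrow> real \<Rightarrow> real measure \<Rightarrow> real \<Rightarrow> real" where
  "laplace_exp \<gamma> \<sigma> Lm l = \<gamma> * l + \<sigma>^2 / 2 * l^2 +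
     integral\<^sup>L Lm (\<lambda>x. exp (l * x) - 1 - l * x * indicator {-1<..} x)"

text \<open>Paths are not monotone: the process is not a pure drift (nondecreasing) and not
  a bounded variation process with non-positive drift (nonincreasing).\<close>
definition sn_not_monotone :: "real \<Rightarrow> real \<Rightarrow> real measure \<Rightarrow> bool" where
  "sn_not_monotone \<gamma> \<sigma> Lm \<longleftrightarrow>
     \<sigma> \<noteq> 0 \<or>
     \<not> integrable Lm (\<lambda>x. \<bar>x\<bar> * indicator {-1<..} x) \<or>
     (\<gamma> + integral\<^sup>L Lm (\<lambda>x. \<bar>x\<bar> * indicator {-1<..} x) > 0 \<and> emeasure Lm UNIV \<noteq> 0)"

definition Phi :: "(real \<Rightarrow> real) \<Rightarrow> real \<Rightarrow> real" where
  "Phi \<psi> q = Sup {l. 0 \<le> l \<and> \<psi> l = q}"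

definition is_scale_family :: "(real \<Rightarrow> real) \<Rightarrow> (real \<Rightarrow> real \<Rightarrow> real) \<Rightarrow> bool" where
  "is_scale_family \<psi> W \<longleftrightarrow> (\<forall>q\<ge>0.
     (\<forall>y<0. W q y = 0) \<and> continuous_on {0..} (W q) \<and>
     (\<forall>l>Phi \<psi> q.
        interval_lebesgue_integrable lborel 0 \<infinity> (\<lambda>y. exp (- l * y) * W q y) \<and>
        (LBINT y=0..\<infinity>. exp (- l * y) * W q y) = 1 / (\<psi> l - q)))"

text \<open>Oriented Lebesgue interval integrals (LBINT x=a..b) are used throughout.\<close>
definition HH :: "(real \<Rightarrow> real) \<Rightarrow> (real \<Rightarrow> real \<Rightarrow> real) \<Rightarrow> real \<Rightarrow> real \<Rightarrow> real \<Rightarrow> real" where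
  "HH \<psi> W p q x = exp (Phi \<psi> p * x) *
     (1 + q * (LBINT z=ereal 0..ereal x. exp (- Phi \<psi> p * z) * W (p + q) z))"

end

theory Submission
  imports Defs
begin

text \<open>Write H for HH and \<Phi> for Phi \<psi> p. Both sides of the convolution identity are continuous
  on [0, \<infinity>), so by uniqueness of Laplace transforms it suffices to compare their transforms at
  all large l. Since H(x) = e^{\<Phi> x} + q (e^{\<Phi> \<cdot>} * W^{(p+q)})(x) for x \<ge> 0, the convolution
  theorem gives
  L[W^{(p)} * H](l) = (\<psi>(l) - p)^{-1} (l - \<Phi>)^{-1} (1 + q / (\<psi>(l) - p - q))
                    = (l - \<Phi>)^{-1} (\<psi>(l) - p - q)^{-1} = L[e^{\<Phi> \<cdot>} * W^{(p+q)}](l),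
  where the middle step needs \<psi>(l) \<noteq> p, p + q: this holds for large l because \<psi>(l) \<rightarrow> \<infinity>
  when the paths are not monotone (a Gaussian part, small jumps of infinite variation, or a
  positive drift each give a linear lower bound). Laplace uniqueness itself follows from the
  Weierstrass approximation theorem after the substitution t = e^{-x}. The second identity is
  the first one for a = 0, rewritten by splitting the integral over [0, x] at a.\<close>

section \<open>Laplace transforms and convolution\<close>

definition laplace_integrable :: "(real \<Rightarrow> real) \<Rightarrow> real \<Rightarrow> bool" where
  "laplace_integrable f l \<longleftrightarrow> set_integrable lborel {0..} (\<lambda>x. exp (- l * x) * f x)"

definition laplace :: "(real \<Rightarrow> real) \<Rightarrow> real \<Rightarrow> real" where
  "laplace f l = (LINT x:{0..}|lborel. exp (- l * x) * f x)"

definition conv :: "(real \<Rightarrow> real) \<Rightarrow> (real \<Rightarrow> real) \<Rightarrow> real \<Rightarrow> real" where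
  "conv f g x = (LINT z:{0..x}|lborel. f (x - z) * g z)"

lemma laplace_integrable_cong:
  assumes "\<And>x. 0 \<le> x \<Longrightarrow> f x = g x"
  shows "laplace_integrable f l \<longleftrightarrow> laplace_integrable g l"
  unfolding laplace_integrable_def using assms by (intro set_integrable_cong) auto

lemma laplace_cong:
  assumes "\<And>x. 0 \<le> x \<Longrightarrow> f x = g x"
  shows "laplace f l = laplace g l"
  unfolding laplace_def using assms by (intro set_lebesgue_integral_cong) auto

lemma
  assumes "laplace_integrable f l" "laplace_integrable g l"
  shows laplace_integrable_lincomb: "laplace_integrable (\<lambda>x. f x + c * g x) l"
    and laplace_lincomb: "laplace (\<lambda>x. f x + c * g x) l = laplace f l + c * laplace g l"
proof -
  have eq: "exp (- l * x) * (f x + c * g x) = exp (- l * x) * f x + c * (exp (- l * x) * g x)" for x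
    by (simp add: algebra_simps)
  show "laplace_integrable (\<lambda>x. f x + c * g x) l"
    using assms unfolding laplace_integrable_def eq by (intro set_integral_add) auto
  show "laplace (\<lambda>x. f x + c * g x) l = laplace f l + c * laplace g l"
    using assms unfolding laplace_integrable_def laplace_def eq by (subst set_integral_add) auto
qed

lemma set_integrable_lborel_if_lebesgue:
  fixes f :: "real \<Rightarrow> real"
  assumes "f \<in> borel_measurable borel" "S \<in> sets borel" "set_integrable lebesgue S f"
  shows "set_integrable lborel S f"
proof -
  have "(\<lambda>x. indicator S x *\<^sub>R f x) \<in> borel_measurable lborel"
    using assms by measurable
  then show ?thesis
    using assms(3) integrable_completion unfolding set_integrable_def by blast
qed

lemma
  fixes a l :: real
  assumes "a < l"
  shows laplace_integrable_exp: "laplace_integrable (\<lambda>x. exp (a * x)) l"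
    and laplace_exp: "laplace (\<lambda>x. exp (a * x)) l = 1 / (l - a)"
proof -
  have eq: "exp (- l * x) * exp (a * x) = exp (- (l - a) * x)" for x
    by (simp add: exp_add[symmetric] algebra_simps)
  have hi: "((\<lambda>x. exp (- (l - a) * x)) has_integral 1 / (l - a)) {0..}"
    using has_integral_exp_minus_to_infinity[of "l - a" 0] assms by simp
  then have "(\<lambda>x. exp (- (l - a) * x)) absolutely_integrable_on {0..}"
    by (intro nonnegative_absolutely_integrable_1) (auto simp: integrable_on_def)
  then have si: "set_integrable lborel {0..} (\<lambda>x. exp (- (l - a) * x))"
    by (intro set_integrable_lborel_if_lebesgue) auto
  then show "laplace_integrable (\<lambda>x. exp (a * x)) l"
    unfolding laplace_integrable_def eq .
  show "laplace (\<lambda>x. exp (a * x)) l = 1 / (l - a)"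
    unfolding laplace_def eq using set_borel_integral_eq_integral(2)[OF si] hi integral_unique
    by auto
qed

lemma integrable_lborel_pair_convolution:
  fixes F G :: "real \<Rightarrow> real"
  assumes [measurable]: "F \<in> borel_measurable borel" "G \<in> borel_measurable borel"
    and "integrable lborel F" "integrable lborel G"
  shows "integrable (lborel \<Otimes>\<^sub>M lborel) (\<lambda>(x, z). F (x - z) * G z)"
proof (rule integrableI_bounded)
  have shift: "(\<integral>\<^sup>+x. ennreal (norm (F (x - z))) \<partial>lborel) = (\<integral>\<^sup>+x. ennreal (norm (F x)) \<partial>lborel)" for z
    using nn_integral_real_affine[of "\<lambda>x. ennreal (norm (F x))" 1 "- z"] by simp
  have "(\<integral>\<^sup>+p. ennreal (norm (case p of (x, z) \<Rightarrow> F (x - z) * G z)) \<partial>(lborel \<Otimes>\<^sub>M lborel))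
      = (\<integral>\<^sup>+z. (\<integral>\<^sup>+x. ennreal (norm (F (x - z) * G z)) \<partial>lborel) \<partial>lborel)"
    by (subst lborel_pair.nn_integral_snd[symmetric]) auto
  also have "\<dots> = (\<integral>\<^sup>+z. (\<integral>\<^sup>+x. ennreal (norm (F (x - z))) \<partial>lborel) * ennreal (norm (G z)) \<partial>lborel)"
    by (intro nn_integral_cong, subst nn_integral_multc[symmetric])
      (auto simp: abs_mult ennreal_mult intro!: nn_integral_cong)
  also have "\<dots> = (\<integral>\<^sup>+x. ennreal (norm (F x)) \<partial>lborel) * (\<integral>\<^sup>+z. ennreal (norm (G z)) \<partial>lborel)"
    unfolding shift by (subst nn_integral_cmult) auto
  also have "\<dots> < \<infinity>"
    using assms(3,4) unfolding integrable_iff_bounded by (simp add: ennreal_mult_less_top)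
  finally show "(\<integral>\<^sup>+p. ennreal (norm (case p of (x, z) \<Rightarrow> F (x - z) * G z)) \<partial>(lborel \<Otimes>\<^sub>M lborel)) < \<infinity>" .
qed simp

lemma
  fixes f g :: "real \<Rightarrow> real"
  assumes [measurable]: "f \<in> borel_measurable borel" "g \<in> borel_measurable borel"
    and f: "laplace_integrable f l" and g: "laplace_integrable g l"
  shows laplace_integrable_conv: "laplace_integrable (conv f g) l"
    and laplace_conv: "laplace (conv f g) l = laplace f l * laplace g l"
proof -
  define F where "F u = indicator {0..} u * (exp (- l * u) * f u)" for u
  define G where "G u = indicator {0..} u * (exp (- l * u) * g u)" for u
  have [measurable]: "F \<in> borel_measurable borel" "G \<in> borel_measurable borel"
    unfolding F_def G_def by measurable
  have "integrable lborel F" "integrable lborel G"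
    using f g unfolding laplace_integrable_def set_integrable_def F_def G_def by simp_all
  then have K: "integrable (lborel \<Otimes>\<^sub>M lborel) (\<lambda>(x, z). F (x - z) * G z)"
    by (intro integrable_lborel_pair_convolution) auto
  have inner: "(\<integral>z. F (x - z) * G z \<partial>lborel) = indicator {0..} x * (exp (- l * x) * conv f g x)" for x
  proof -
    have "F (x - z) * G z = indicator {0..} x * (exp (- l * x) * (indicator {0..x} z * (f (x - z) * g z)))" for z
      unfolding F_def G_def by (auto simp: indicator_def algebra_simps exp_add[symmetric])
    then show ?thesis
      unfolding conv_def set_lebesgue_integral_def by simp
  qed
  have shift: "(\<integral>x. F (x - z) \<partial>lborel) = (\<integral>x. F x \<partial>lborel)" for z
    using lborel_integral_real_affine[of 1 F "- z"] by simp
  have "integrable lborel (\<lambda>x. \<integral>z. F (x - z) * G z \<partial>lborel)"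
    using lborel_pair.integrable_fst[OF K] by simp
  then show "laplace_integrable (conv f g) l"
    unfolding laplace_integrable_def set_integrable_def inner by simp
  have "laplace (conv f g) l = (\<integral>x. (\<integral>z. F (x - z) * G z \<partial>lborel) \<partial>lborel)"
    unfolding laplace_def set_lebesgue_integral_def inner by simp
  also have "\<dots> = (\<integral>z. (\<integral>x. F (x - z) * G z \<partial>lborel) \<partial>lborel)"
    using lborel_pair.Fubini_integral[OF K] by simp
  also have "\<dots> = (\<integral>x. F x \<partial>lborel) * (\<integral>z. G z \<partial>lborel)"
    using shift by simp
  also have "\<dots> = laplace f l * laplace g l"
    unfolding laplace_def set_lebesgue_integral_def F_def G_def by simp
  finally show "laplace (conv f g) l = laplace f l * laplace g l" .
qed

lemma
  fixes u P :: "real \<Rightarrow> real"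
  assumes int: "\<And>n. integrable lborel (\<lambda>y. exp (- y) ^ n * u y)"
    and mom: "\<And>n. (\<integral>y. exp (- y) ^ n * u y \<partial>lborel) = 0"
    and P: "real_polynomial_function P"
  shows integrable_poly_exp_neg_mult: "integrable lborel (\<lambda>y. P (exp (- y)) * u y)"
    and integral_poly_exp_neg_mult_eq_0: "(\<integral>y. P (exp (- y)) * u y \<partial>lborel) = 0"
proof -
  obtain a N where P: "P = (\<lambda>x. \<Sum>i\<le>N. a i * x ^ i)"
    using real_polynomial_function_iff_sum[THEN iffD1, OF P] by (elim exE)
  have sum: "P (exp (- y)) * u y = (\<Sum>i\<le>N. a i * (exp (- y) ^ i * u y))" for y
    unfolding P sum_distrib_right by (simp only: mult.assoc)
  show "integrable lborel (\<lambda>y. P (exp (- y)) * u y)"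
    unfolding sum by (auto intro!: int)
  have "(\<integral>y. P (exp (- y)) * u y \<partial>lborel) = (\<Sum>i\<le>N. a i * (\<integral>y. exp (- y) ^ i * u y \<partial>lborel))"
    unfolding sum using int by (subst Bochner_Integration.integral_sum) auto
  then show "(\<integral>y. P (exp (- y)) * u y \<partial>lborel) = 0"
    by (simp add: mom)
qed

lemma integrable_continuous_exp_neg_mult:
  fixes u \<phi> :: "real \<Rightarrow> real"
  assumes neg: "\<And>y. y < 0 \<Longrightarrow> u y = 0" and u: "integrable lborel u"
    and \<phi>: "continuous_on {0..1} \<phi>"
  shows "integrable lborel (\<lambda>y. \<phi> (exp (- y)) * u y)"
proof -
  have exp_01: "exp (- y) \<in> {0..1}" if "0 \<le> y" for y :: real
    using that exp_gt_zero[of "- y"] by simp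
  obtain B where B: "\<And>t. t \<in> {0..1} \<Longrightarrow> \<bar>\<phi> t\<bar> \<le> B"
    using compact_imp_bounded[OF compact_continuous_image[OF \<phi> compact_Icc]]
    unfolding bounded_iff by (metis image_eqI real_norm_def)
  have restrict: "\<phi> (exp (- y)) * u y = (indicator {0..} y *\<^sub>R \<phi> (exp (- y))) * u y" for y
    using neg[of y] by (auto simp: indicator_def)
  have "(\<lambda>y. indicator {0..} y *\<^sub>R \<phi> (exp (- y))) \<in> borel_measurable borel"
    using exp_01 by (intro borel_measurable_continuous_on_indicator continuous_on_compose2[OF \<phi>]
        continuous_intros) auto
  then have meas: "(\<lambda>y. \<phi> (exp (- y)) * u y) \<in> borel_measurable lborel"
    unfolding restrict using borel_measurable_integrable[OF u] by measurable
  have bound: "norm (\<phi> (exp (- y)) * u y) \<le> norm (B * \<bar>u y\<bar>)" for y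
  proof (cases "0 \<le> y")
    case True
    then have "\<bar>\<phi> (exp (- y))\<bar> \<le> B"
      using B exp_01 by blast
    then show ?thesis
      by (simp add: abs_mult mult_right_mono)
  qed (simp add: neg)
  have AE_bound: "AE y in lborel. norm (\<phi> (exp (- y)) * u y) \<le> norm (B * \<bar>u y\<bar>)"
    by (rule AE_I2) (rule bound)
  have "integrable lborel (\<lambda>y. B * \<bar>u y\<bar>)"
    using u by simp
  then show ?thesis
    by (rule Bochner_Integration.integrable_bound[OF _ meas AE_bound])
qed

lemma integral_continuous_exp_neg_mult_eq_0:
  fixes u \<phi> :: "real \<Rightarrow> real"
  assumes neg: "\<And>y. y < 0 \<Longrightarrow> u y = 0"
    and int: "\<And>n. integrable lborel (\<lambda>y. exp (- y) ^ n * u y)"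
    and mom: "\<And>n. (\<integral>y. exp (- y) ^ n * u y \<partial>lborel) = 0"
    and \<phi>: "continuous_on {0..1} \<phi>"
  shows "(\<integral>y. \<phi> (exp (- y)) * u y \<partial>lborel) = 0"
proof -
  have u: "integrable lborel u"
    using int[of 0] by simp
  note int_\<phi> = integrable_continuous_exp_neg_mult[OF neg u \<phi>]
  define A where "A = (\<integral>y. \<bar>u y\<bar> \<partial>lborel) + 1"
  have A: "0 < A"
    unfolding A_def by (simp add: add_nonneg_pos)
  have "\<bar>\<integral>y. \<phi> (exp (- y)) * u y \<partial>lborel\<bar> \<le> 0 + e" if e: "0 < e" for e
  proof -
    obtain P where P: "real_polynomial_function P" "\<And>t. t \<in> {0..1} \<Longrightarrow> \<bar>\<phi> t - P t\<bar> < e / A"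
      using Stone_Weierstrass_real_polynomial_function[OF compact_Icc \<phi>, of "e / A"] e A by auto
    note int_P = integrable_poly_exp_neg_mult[OF int mom P(1)]
    have "\<bar>\<integral>y. \<phi> (exp (- y)) * u y \<partial>lborel\<bar>
        = norm (\<integral>y. (\<phi> (exp (- y)) - P (exp (- y))) * u y \<partial>lborel)"
      using integral_poly_exp_neg_mult_eq_0[OF int mom P(1)] int_P int_\<phi>
      by (simp add: left_diff_distrib)
    also have "\<dots> \<le> (\<integral>y. e / A * \<bar>u y\<bar> \<partial>lborel)"
    proof (rule Bochner_Integration.integral_norm_bound_integral)
      show "integrable lborel (\<lambda>y. (\<phi> (exp (- y)) - P (exp (- y))) * u y)"
        using int_\<phi> int_P by (simp add: left_diff_distrib)
      show "integrable lborel (\<lambda>y. e / A * \<bar>u y\<bar>)"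
        using u by auto
      fix y :: real
      show "norm ((\<phi> (exp (- y)) - P (exp (- y))) * u y) \<le> e / A * \<bar>u y\<bar>"
      proof (cases "0 \<le> y")
        case True
        then have "\<bar>\<phi> (exp (- y)) - P (exp (- y))\<bar> \<le> e / A"
          using P(2)[of "exp (- y)"] exp_gt_zero[of "- y"] by simp
        then show ?thesis
          by (metis abs_ge_zero abs_mult mult_right_mono real_norm_def)
      qed (simp add: neg)
    qed
    also have "\<dots> = e * ((A - 1) / A)"
      unfolding A_def by simp
    also have "\<dots> \<le> e"
      using A e by (simp add: pos_divide_le_eq algebra_simps)
    finally show ?thesis
      by simp
  qed
  then show ?thesis
    using field_le_epsilon[of "\<bar>\<integral>y. \<phi> (exp (- y)) * u y \<partial>lborel\<bar>" 0] by simp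
qed

lemma exp_moments_eq_0_imp_eq_0:
  fixes u :: "real \<Rightarrow> real"
  assumes neg: "\<And>y. y < 0 \<Longrightarrow> u y = 0" and cont: "continuous_on {0<..} u"
    and int: "\<And>n. integrable lborel (\<lambda>y. exp (- y) ^ n * u y)"
    and mom: "\<And>n. (\<integral>y. exp (- y) ^ n * u y \<partial>lborel) = 0"
    and y0: "0 < y0"
  shows "u y0 = 0"
proof (rule ccontr)
  assume "u y0 \<noteq> 0"
  \<comment> \<open>c u is positive near y0, so a tent function of e^{-y} supported there has a positive
    integral against c u, whereas all such integrals vanish\<close>
  define c where "c = u y0"
  have c: "0 < c * u y0"
    using \<open>u y0 \<noteq> 0\<close> unfolding c_def by (metis not_real_square_gt_zero)
  have "continuous_on {0<..} (\<lambda>y. c * u y)"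
    using cont by (intro continuous_intros)
  then obtain d where d: "0 < d"
    "\<And>y. y \<in> {0<..} \<Longrightarrow> dist y y0 < d \<Longrightarrow> dist (c * u y) (c * u y0) < c * u y0"
    using y0 c unfolding continuous_on_iff by (metis greaterThan_iff)
  define \<eta> where "\<eta> = min d y0"
  have \<eta>: "0 < \<eta>"
    using d y0 unfolding \<eta>_def by simp
  have pos: "0 < c * u y" if "\<bar>y - y0\<bar> < \<eta>" for y
  proof -
    have "0 < y" "dist y y0 < d"
      using that unfolding \<eta>_def dist_real_def by auto
    then show ?thesis
      using d(2)[of y] by (auto simp: dist_real_def)
  qed
  define \<phi> where "\<phi> t = max 0 (min (t - exp (- (y0 + \<eta>))) (exp (- (y0 - \<eta>)) - t))" for t
  have \<phi>_nonneg: "0 \<le> \<phi> t" for t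
    unfolding \<phi>_def by simp
  have tent: "0 < max 0 (min (t - a) (b - t)) \<longleftrightarrow> a < t \<and> t < b" for t a b :: real
    by auto
  have \<phi>_pos: "0 < \<phi> (exp (- y)) \<longleftrightarrow> \<bar>y - y0\<bar> < \<eta>" for y
    unfolding \<phi>_def tent by (auto simp: abs_diff_less_iff)
  have "continuous_on {0..1} \<phi>"
    unfolding \<phi>_def by (intro continuous_intros)
  note \<phi>u = integrable_continuous_exp_neg_mult[OF neg int[of 0, simplified] this]
    integral_continuous_exp_neg_mult_eq_0[OF neg int mom this]
  define v where "v y = \<phi> (exp (- y)) * (c * u y)" for y
  have v_eq: "v = (\<lambda>y. c * (\<phi> (exp (- y)) * u y))"
    unfolding v_def by (simp add: fun_eq_iff mult.left_commute)
  have v_int: "integrable lborel v" and v_0: "(\<integral>y. v y \<partial>lborel) = 0"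
    using \<phi>u unfolding v_eq by simp_all
  have v_pos: "0 < v y" if "y \<in> {y0 - \<eta><..<y0 + \<eta>}" for y
    using that pos[of y] \<phi>_pos[of y] unfolding v_def by (simp add: abs_diff_less_iff)
  have "0 \<le> v y" for y
    using v_pos[of y] \<phi>_pos[of y] \<phi>_nonneg[of "exp (- y)"] unfolding v_def
    by (cases "\<bar>y - y0\<bar> < \<eta>") (auto simp: abs_diff_less_iff)
  then have "AE y in lborel. v y = 0"
    using integral_nonneg_eq_0_iff_AE[OF v_int] v_0 by simp
  then have "AE y in lborel. y \<notin> {y0 - \<eta><..<y0 + \<eta>}"
    by eventually_elim (use v_pos in force)
  then have "emeasure lborel {y0 - \<eta><..<y0 + \<eta>} = 0"
    by (subst (asm) AE_iff_measurable[of "{y0 - \<eta><..<y0 + \<eta>}"]) auto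
  then show False
    using \<eta> by simp
qed

lemma laplace_unique:
  fixes f g :: "real \<Rightarrow> real"
  assumes cont: "continuous_on {0..} f" "continuous_on {0..} g"
    and int: "\<And>n::nat. laplace_integrable f (l0 + n)" "\<And>n::nat. laplace_integrable g (l0 + n)"
    and eq: "\<And>n::nat. laplace f (l0 + n) = laplace g (l0 + n)"
    and y: "0 < y"
  shows "f y = g y"
proof -
  define u where "u y = indicator {0..} y * (exp (- l0 * y) * (f y - g y))" for y
  have moment: "exp (- y) ^ n * u y = indicator {0..} y * (exp (- (l0 + n) * y) * f y)
      - indicator {0..} y * (exp (- (l0 + n) * y) * g y)" for n y
    unfolding u_def exp_of_nat_mult[symmetric] by (simp add: algebra_simps exp_add[symmetric])
  have "u y = 0" if "y < 0" for y
    using that by (simp add: u_def)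
  moreover have "continuous_on {0<..} u"
  proof (rule continuous_on_eq)
    have sub: "{0<..} \<subseteq> {0::real..}"
      by auto
    show "continuous_on {0<..} (\<lambda>y. exp (- l0 * y) * (f y - g y))"
      by (intro continuous_intros continuous_on_subset[OF cont(1) sub] continuous_on_subset[OF cont(2) sub])
  qed (simp add: u_def)
  moreover have "integrable lborel (\<lambda>y. exp (- y) ^ n * u y)" for n
    unfolding moment using int[of n] unfolding laplace_integrable_def set_integrable_def by simp
  moreover have "(\<integral>y. exp (- y) ^ n * u y \<partial>lborel) = 0" for n
    unfolding moment using int[of n] eq[of n]
    unfolding laplace_integrable_def set_integrable_def laplace_def set_lebesgue_integral_def
    by simp
  ultimately have "u y = 0"
    by (rule exp_moments_eq_0_imp_eq_0[OF _ _ _ _ y])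
  then show ?thesis
    using y unfolding u_def by simp
qed

section \<open>Continuity of convolutions\<close>

lemma norm_integral_diff_le_integral_abs_diff:
  fixes f g :: "real \<Rightarrow> real"
  assumes f: "continuous_on {0..N} f" and g: "continuous_on {0..N} g" and x: "x \<in> {0..N}"
  shows "norm (integral {0..x} f - integral {0..x} g) \<le> integral {0..N} (\<lambda>t. \<bar>f t - g t\<bar>)"
proof -
  have sub: "{0..x} \<subseteq> {0..N}"
    using x by auto
  note f_x = continuous_on_subset[OF f sub] and g_x = continuous_on_subset[OF g sub]
  have int_f: "f integrable_on {0..x}" and int_g: "g integrable_on {0..x}"
    by (intro integrable_continuous_real f_x g_x)+
  have int_x: "(\<lambda>t. \<bar>f t - g t\<bar>) integrable_on {0..x}"
    by (intro integrable_continuous_real continuous_intros f_x g_x)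
  have int_N: "(\<lambda>t. \<bar>f t - g t\<bar>) integrable_on {0..N}"
    by (intro integrable_continuous_real continuous_intros f g)
  have "norm (integral {0..x} f - integral {0..x} g) = norm (integral {0..x} (\<lambda>t. f t - g t))"
    by (simp only: integral_diff[OF int_f int_g])
  also have "\<dots> \<le> integral {0..x} (\<lambda>t. \<bar>f t - g t\<bar>)"
    by (intro integral_norm_bound_integral integrable_diff int_f int_g int_x) simp
  also have "\<dots> \<le> integral {0..N} (\<lambda>t. \<bar>f t - g t\<bar>)"
    by (intro integral_subset_le sub int_x int_N) simp
  finally show ?thesis .
qed

lemma continuous_on_integral_Icc_param:
  fixes F :: "real \<Rightarrow> real \<Rightarrow> real"
  assumes F: "continuous_on UNIV (\<lambda>(x, z). F x z)"
  shows "continuous_on {0..} (\<lambda>x. integral {0..x} (F x))"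
  unfolding continuous_on_iff
proof (intro ballI allI impI)
  fix x0 e :: real
  assume x0: "x0 \<in> {0..}" and e: "0 < e"
  define N where "N = x0 + 1"
  have F_pair: "continuous_on UNIV (\<lambda>p. F (fst p) (snd p))"
    using F by (simp add: case_prod_beta)
  have F_x: "continuous_on S (F x)" for x S
    by (rule continuous_on_compose2[OF F_pair, of S "\<lambda>z. (x, z)", simplified])
      (auto intro: continuous_intros)
  \<comment> \<open>the change of integrand is controlled uniformly on [0, N], the change of domain by
    continuity of the indefinite integral\<close>
  define \<Delta> where "\<Delta> x = integral (cbox 0 N) (\<lambda>t. \<bar>F x t - F x0 t\<bar>)" for x
  have F_x0: "continuous_on UNIV (\<lambda>p::real \<times> real. F x0 (snd p))"
    using continuous_on_compose2[OF F_pair, of UNIV "\<lambda>p. (x0, snd p)"] by (simp add: continuous_intros)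
  have "continuous_on UNIV \<Delta>"
    unfolding \<Delta>_def
    by (intro integral_continuous_on_param, unfold case_prod_beta)
      (intro continuous_intros continuous_on_subset[OF F_pair] continuous_on_subset[OF F_x0]; simp)
  then obtain d1 where d1: "0 < d1" "\<And>x. dist x x0 < d1 \<Longrightarrow> dist (\<Delta> x) (\<Delta> x0) < e / 2"
    using e unfolding continuous_on_iff by (metis UNIV_I half_gt_zero)
  define K where "K x = integral {0..x} (F x0)" for x
  have "continuous_on {0..N} K"
    unfolding K_def by (intro indefinite_integral_continuous_1 integrable_continuous_real F_x)
  then obtain d2 where d2: "0 < d2" "\<And>x. x \<in> {0..N} \<Longrightarrow> dist x x0 < d2 \<Longrightarrow> dist (K x) (K x0) < e / 2"
    using x0 e unfolding continuous_on_iff N_def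
    by (metis atLeastAtMost_iff atLeast_iff half_gt_zero less_add_one less_imp_le)
  show "\<exists>d>0. \<forall>x\<in>{0..}. dist x x0 < d \<longrightarrow> dist (integral {0..x} (F x)) (integral {0..x0} (F x0)) < e"
  proof (intro exI[of _ "min 1 (min d1 d2)"] conjI ballI impI)
    show "0 < min 1 (min d1 d2)"
      using d1 d2 by auto
    fix x
    assume x: "x \<in> {0..}" "dist x x0 < min 1 (min d1 d2)"
    then have xN: "x \<in> {0..N}"
      unfolding N_def by (auto simp: dist_real_def)
    have "norm (integral {0..x} (F x) - integral {0..x} (F x0)) \<le> \<Delta> x"
      unfolding \<Delta>_def cbox_interval by (rule norm_integral_diff_le_integral_abs_diff[OF F_x F_x xN])
    also have "\<dots> < e / 2"
      using d1(2)[of x] x by (simp add: \<Delta>_def dist_real_def)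
    finally have "norm (integral {0..x} (F x) - integral {0..x} (F x0)) < e / 2" .
    moreover have "norm (K x - K x0) < e / 2"
      using d2(2)[OF xN] x by (simp add: dist_norm)
    ultimately have "norm ((integral {0..x} (F x) - integral {0..x} (F x0)) + (K x - K x0)) < e"
      by (intro norm_triangle_lt) simp
    then show "dist (integral {0..x} (F x)) (integral {0..x0} (F x0)) < e"
      unfolding K_def dist_norm by simp
  qed
qed

lemma continuous_on_max_0:
  fixes f :: "real \<Rightarrow> real"
  assumes "continuous_on {0..} f"
  shows "continuous_on S (\<lambda>u. f (max 0 u))"
  by (rule continuous_on_compose2[OF assms]) (auto intro: continuous_intros)

lemma continuous_on_conv:
  fixes f g :: "real \<Rightarrow> real"
  assumes f: "continuous_on {0..} f" and g: "continuous_on {0..} g"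
  shows "continuous_on {0..} (conv f g)"
proof -
  define F where "F x z = f (max 0 (x - z)) * g (max 0 z)" for x z
  have F: "continuous_on UNIV (\<lambda>(x, z). F x z)"
  proof -
    have "continuous_on UNIV (\<lambda>p::real \<times> real. fst p - snd p)"
      by (intro continuous_on_diff continuous_on_fst continuous_on_snd continuous_on_id)
    then have "continuous_on UNIV (\<lambda>p::real \<times> real. f (max 0 (fst p - snd p)))"
      by (rule continuous_on_compose2[OF continuous_on_max_0[OF f, of UNIV]]) auto
    moreover have "continuous_on UNIV (\<lambda>p::real \<times> real. g (max 0 (snd p)))"
      by (rule continuous_on_compose2[OF continuous_on_max_0[OF g, of UNIV]]) (auto intro: continuous_intros)
    ultimately show ?thesis
      unfolding F_def case_prod_beta by (intro continuous_intros)
  qed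
  have F_x: "continuous_on S (F x)" for x S
    by (intro continuous_on_compose2[OF F, of S "\<lambda>z. (x, z)", simplified] continuous_intros)
  have conv_eq: "integral {0..x} (F x) = conv f g x" if "x \<in> {0..}" for x
  proof -
    have "conv f g x = (LINT z:{0..x}|lborel. F x z)"
      unfolding conv_def F_def by (rule set_lebesgue_integral_cong) (auto simp: max_def)
    also have "\<dots> = integral {0..x} (F x)"
      by (intro set_borel_integral_eq_integral(2) borel_integrable_atLeastAtMost' F_x)
    finally show ?thesis
      by simp
  qed
  show ?thesis
    using continuous_on_integral_Icc_param[OF F] conv_eq by (rule continuous_on_eq)
qed

lemma continuous_on_interval_integral_0:
  fixes w :: "real \<Rightarrow> real"
  assumes cont: "continuous_on {0..} w" and neg: "\<And>z. z < 0 \<Longrightarrow> w z = 0"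
  shows "continuous_on UNIV (\<lambda>x. LBINT z=ereal 0..ereal x. w z)"
proof -
  define G where "G z = w (max 0 z)" for z
  have G: "continuous_on UNIV G"
    unfolding G_def by (rule continuous_on_max_0[OF cont])
  have "continuous_on UNIV (\<lambda>x. LBINT z=ereal 0..ereal x. G z)"
  proof (intro continuous_at_imp_continuous_on ballI)
    fix x0 :: real
    define a b where "a = min (x0 - 1) (-1)" and "b = max (x0 + 1) 1"
    have ab: "a \<le> 0" "0 \<le> b" "a < x0" "x0 < b"
      unfolding a_def b_def by auto
    have "((\<lambda>u. LBINT z=ereal 0..ereal u. G z) has_vector_derivative G x0) (at x0 within {a..b})"
      using ab by (intro interval_integral_FTC2 continuous_on_subset[OF G]) auto
    then have "((\<lambda>u. LBINT z=ereal 0..ereal u. G z) has_vector_derivative G x0) (at x0)"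
      using at_within_Icc_at[OF ab(3,4)] by simp
    then show "isCont (\<lambda>x. LBINT z=ereal 0..ereal x. G z) x0"
      by (rule has_vector_derivative_continuous)
  qed
  then have "continuous_on UNIV (\<lambda>x. LBINT z=ereal 0..ereal (max 0 x). G z)"
    by (rule continuous_on_compose2) (auto intro: continuous_intros)
  moreover have "(LBINT z=ereal 0..ereal x. w z) = (LBINT z=ereal 0..ereal (max 0 x). G z)" for x
  proof (cases "0 \<le> x")
    case True
    then show ?thesis
      unfolding G_def
      by (auto intro!: interval_integral_cong simp: einterval_iff min_def max_def)
  next
    case False
    then have "(LBINT z=ereal 0..ereal x. w z) = (LBINT z=ereal 0..ereal x. 0)"
      by (intro interval_integral_cong) (auto simp: einterval_iff min_def max_def neg)
    then show ?thesis
      using False by simp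
  qed
  ultimately show ?thesis
    by simp
qed

section \<open>Growth of the Laplace exponent\<close>

lemma exp_le_quadratic_nonpos:
  fixes y :: real
  assumes "y \<le> 0"
  shows "exp y \<le> 1 + y + y^2 / 2"
proof -
  define g where "g t = 1 + t + t^2 / 2 - exp t" for t :: real
  have "g 0 \<le> g y"
  proof (rule DERIV_nonpos_imp_nonincreasing[OF assms])
    fix t :: real
    have "(g has_real_derivative (1 + t - exp t)) (at t)"
      unfolding g_def by (auto intro!: derivative_eq_intros simp: power2_eq_square)
    moreover have "1 + t - exp t \<le> 0"
      using exp_ge_add_one_self[of t] by simp
    ultimately show "\<exists>y. (g has_real_derivative y) (at t) \<and> y \<le> 0"
      by blast
  qed
  then show ?thesis
    unfolding g_def by simp
qed

definition lk_integrand :: "real \<Rightarrow> real \<Rightarrow> real" where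
  "lk_integrand l x = exp (l * x) - 1 - l * x * indicator {-1<..} x"

lemma laplace_exp_eq_lk_integrand:
  "laplace_exp \<gamma> \<sigma> Lm l = \<gamma> * l + \<sigma>^2 / 2 * l^2 + (\<integral>x. lk_integrand l x \<partial>Lm)"
  unfolding laplace_exp_def lk_integrand_def ..

lemma lk_integrand_le_minus_1: "x \<le> -1 \<Longrightarrow> lk_integrand l x = exp (l * x) - 1"
  unfolding lk_integrand_def by (simp add: indicator_def)

lemma lk_integrand_gt_minus_1: "-1 < x \<Longrightarrow> lk_integrand l x = exp (l * x) - 1 - l * x"
  unfolding lk_integrand_def by (simp add: indicator_def)

lemma abs_lk_integrand_le:
  assumes "x < 0" "0 \<le> l"
  shows "\<bar>lk_integrand l x\<bar> \<le> max 1 (l^2 / 2) * min 1 (x^2)"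
proof (cases "x \<le> -1")
  case True
  then have "min 1 (x^2) = 1"
    using power2_ge_1_iff by force
  moreover have "exp (l * x) \<le> 1"
    using assms by (simp add: mult_nonneg_nonpos)
  moreover have "1 \<le> max 1 (l^2 / 2)"
    by simp
  ultimately show ?thesis
    unfolding lk_integrand_le_minus_1[OF True] using exp_gt_zero[of "l * x"] by linarith
next
  case False
  then have k: "lk_integrand l x = exp (l * x) - 1 - l * x"
    by (intro lk_integrand_gt_minus_1) simp
  have "x^2 \<le> 1"
    using False assms by (simp add: abs_square_le_1)
  then have min: "min 1 (x^2) = x^2"
    by simp
  have lx: "l * x \<le> 0"
    using assms by (simp add: mult_nonneg_nonpos)
  have "0 \<le> exp (l * x) - 1 - l * x"
    using exp_ge_add_one_self[of "l * x"] by linarith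
  moreover have "exp (l * x) - 1 - l * x \<le> l^2 / 2 * x^2"
    using exp_le_quadratic_nonpos[OF lx] by (simp add: power_mult_distrib)
  moreover have "l^2 / 2 * x^2 \<le> max 1 (l^2 / 2) * x^2"
    by (intro mult_right_mono) auto
  ultimately show ?thesis
    unfolding k min by linarith
qed

lemma lk_integrand_ge:
  assumes "x < 0" "0 \<le> l"
  shows "- min 1 (x^2) \<le> lk_integrand l x"
proof (cases "x \<le> -1")
  case True
  then have "min 1 (x^2) = 1"
    using power2_ge_1_iff by force
  then show ?thesis
    unfolding lk_integrand_le_minus_1[OF True] using exp_gt_zero[of "l * x"] by linarith
next
  case False
  then have "lk_integrand l x = exp (l * x) - 1 - l * x"
    by (intro lk_integrand_gt_minus_1) simp
  moreover have "0 \<le> min 1 (x^2)"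
    by simp
  ultimately show ?thesis
    using exp_ge_add_one_self[of "l * x"] by linarith
qed

lemma lk_integrand_ge_jumps_below:
  assumes "x < 0" "0 < \<delta>" "2 \<le> l * \<delta>" "0 \<le> l"
  shows "l / 2 * (\<bar>x\<bar> * indicator {-1<..-\<delta>} x) - min 1 (x^2) \<le> lk_integrand l x"
proof (cases "-1 < x \<and> x \<le> -\<delta>")
  case False
  then have "indicator {-1<..-\<delta>} x = (0::real)"
    by (simp add: indicator_def)
  then show ?thesis
    using lk_integrand_ge[OF assms(1,4)] by simp
next
  case True
  then have k: "lk_integrand l x = exp (l * x) - 1 + l * \<bar>x\<bar>"
    using lk_integrand_gt_minus_1[of x l] assms by simp
  have "l * \<delta> \<le> l * \<bar>x\<bar>"
    using assms True by (intro mult_left_mono) auto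
  then have "l / 2 * \<bar>x\<bar> \<le> lk_integrand l x"
    unfolding k using assms exp_gt_zero[of "l * x"] by linarith
  moreover have "0 \<le> min 1 (x^2)"
    by simp
  moreover have ind: "indicator {-1<..-\<delta>} x = (1::real)"
    using True by (simp add: indicator_def)
  ultimately show ?thesis
    unfolding ind by linarith
qed

lemma lk_integrand_ge_jumps_above:
  assumes "x < 0" "0 < \<delta>" "\<delta> \<le> 1" "0 \<le> l"
  shows "l * (\<bar>x\<bar> * indicator {-1<..} x) - l * (\<bar>x\<bar> * indicator {-\<delta><..} x)
      - min 1 (x^2) / \<delta>^2 \<le> lk_integrand l x"
proof -
  have \<delta>2: "0 < \<delta>^2" "\<delta>^2 \<le> 1"
    using assms by (auto simp: power_le_one)
  show ?thesis
  proof (cases "x \<le> -1")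
    case True
    then have min: "min 1 (x^2) = 1"
      using power2_ge_1_iff by force
    have "1 \<le> 1 / \<delta>^2"
      using \<delta>2 by simp
    moreover have i: "indicator {-\<delta><..} x = (0::real)" "indicator {-1<..} x = (0::real)"
      using True assms by (auto simp: indicator_def)
    ultimately show ?thesis
      unfolding lk_integrand_le_minus_1[OF True] min i using exp_gt_zero[of "l * x"] by linarith
  next
    case False
    then have k: "lk_integrand l x = exp (l * x) - 1 + l * \<bar>x\<bar>"
      using lk_integrand_gt_minus_1[of x l] assms by simp
    have i1: "indicator {-1<..} x = (1::real)"
      using False by simp
    show ?thesis
    proof (cases "x \<le> -\<delta>")
      case True
      have "\<delta>^2 \<le> x^2"
        using True assms power_mono[of \<delta> "- x" 2] by simp
      moreover have "x^2 \<le> 1"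
        using False assms by (simp add: abs_square_le_1)
      ultimately have "1 \<le> min 1 (x^2) / \<delta>^2"
        using \<delta>2 by simp
      moreover have i2: "indicator {-\<delta><..} x = (0::real)"
        using True by (simp add: indicator_def)
      ultimately show ?thesis
        unfolding k i1 i2 using exp_gt_zero[of "l * x"] by linarith
    next
      case False
      have "0 \<le> min 1 (x^2) / \<delta>^2"
        by simp
      moreover have i2: "indicator {-\<delta><..} x = (1::real)"
        using False by (simp add: indicator_def)
      moreover have "l * \<bar>x\<bar> = - (l * x)"
        using assms by simp
      ultimately show ?thesis
        unfolding k i1 i2 using exp_ge_add_one_self[of "l * x"] by linarith
    qed
  qed
qed

lemma eventually_le_minus_inverse_Suc:
  fixes x :: real
  assumes "x < 0"
  shows "\<forall>\<^sub>F n in sequentially. x \<le> - 1 / (real n + 1)"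
proof -
  obtain N :: nat where N: "0 < N" "inverse (real N) < - x"
    using ex_inverse_of_nat_less[of "- x"] assms by auto
  show ?thesis
    unfolding eventually_sequentially
  proof (intro exI[of _ N] allI impI)
    fix n
    assume "N \<le> n"
    then have "1 / (real n + 1) \<le> inverse (real N)"
      using N by (simp add: field_simps)
    then show "x \<le> - 1 / (real n + 1)"
      using N by simp
  qed
qed

lemma
  fixes x :: real
  shows mono_jumps_between: "mono (\<lambda>n. \<bar>x\<bar> * indicator {-1<..-(1 / (real n + 1))} x)"
    and tendsto_jumps_between:
      "(\<lambda>n. \<bar>x\<bar> * indicator {-1<..-(1 / (real n + 1))} x) \<longlonglongrightarrow> \<bar>x\<bar> * indicator {-1<..<0} x"
proof -
  have inv_pos: "0 < 1 / (real n + 1)" for n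
    by simp
  show "mono (\<lambda>n. \<bar>x\<bar> * indicator {-1<..-(1 / (real n + 1))} x)"
  proof (rule monoI)
    fix n m :: nat
    assume "n \<le> m"
    then have "1 / (real m + 1) \<le> 1 / (real n + 1)"
      by (simp add: field_simps)
    then show "\<bar>x\<bar> * indicator {-1<..-(1 / (real n + 1))} x \<le> \<bar>x\<bar> * indicator {-1<..-(1 / (real m + 1))} x"
      by (auto simp: indicator_def)
  qed
  show "(\<lambda>n. \<bar>x\<bar> * indicator {-1<..-(1 / (real n + 1))} x) \<longlonglongrightarrow> \<bar>x\<bar> * indicator {-1<..<0} x"
  proof (cases "-1 < x \<and> x < 0")
    case True
    then have "\<forall>\<^sub>F n in sequentially. x \<le> - 1 / (real n + 1)"
      by (intro eventually_le_minus_inverse_Suc) simp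
    then have "\<forall>\<^sub>F n in sequentially.
        \<bar>x\<bar> * indicator {-1<..-(1 / (real n + 1))} x = \<bar>x\<bar> * indicator {-1<..<0} x"
      using True by (auto simp: indicator_def elim!: eventually_mono)
    then show ?thesis
      by (rule tendsto_eventually)
  next
    case False
    have "\<bar>x\<bar> * indicator {-1<..-(1 / (real n + 1))} x = \<bar>x\<bar> * indicator {-1<..<0} x" for n
    proof -
      have "\<not> (-1 < x \<and> x \<le> - (1 / (real n + 1)))"
        using False inv_pos[of n] by linarith
      then show ?thesis
        using False by (simp add: indicator_def)
    qed
    then have "(\<lambda>n. \<bar>x\<bar> * indicator {-1<..-(1 / (real n + 1))} x) = (\<lambda>n. \<bar>x\<bar> * indicator {-1<..<0} x)"
      by (rule ext)
    then show ?thesis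
      by (simp only: tendsto_const)
  qed
qed

context
  fixes Lm :: "real measure"
  assumes Lm: "levy_measure_sn Lm"
begin

lemma sets_levy_measure [measurable_cong]: "sets Lm = sets borel"
  using Lm unfolding levy_measure_sn_def by simp

lemma integrable_levy_measure_min_sq: "integrable Lm (\<lambda>x. min 1 (x^2))"
  using Lm unfolding levy_measure_sn_def by simp

lemma AE_levy_measure_neg: "AE x in Lm. x < 0"
proof -
  have "{0..} \<in> null_sets Lm"
    using Lm unfolding levy_measure_sn_def by (simp add: null_sets_def)
  then have "AE x in Lm. x \<notin> {0..}"
    by (rule AE_not_in)
  then show ?thesis
    by eventually_elim auto
qed

lemma integrable_lk_integrand:
  assumes l: "0 \<le> l"
  shows "integrable Lm (lk_integrand l)"
proof (rule Bochner_Integration.integrable_bound)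
  show "integrable Lm (\<lambda>x. max 1 (l^2 / 2) * min 1 (x^2))"
    using integrable_levy_measure_min_sq by simp
  show "lk_integrand l \<in> borel_measurable Lm"
    unfolding lk_integrand_def by measurable
  show "AE x in Lm. norm (lk_integrand l x) \<le> norm (max 1 (l^2 / 2) * min 1 (x^2))"
    using AE_levy_measure_neg
  proof eventually_elim
    fix x :: real
    assume "x < 0"
    then show "norm (lk_integrand l x) \<le> norm (max 1 (l^2 / 2) * min 1 (x^2))"
      using abs_lk_integrand_le[OF _ l] by simp
  qed
qed

lemma integral_lk_integrand_ge:
  assumes l: "0 \<le> l"
  shows "- (\<integral>x. min 1 (x^2) \<partial>Lm) \<le> (\<integral>x. lk_integrand l x \<partial>Lm)"
proof -
  have "(\<integral>x. - min 1 (x^2) \<partial>Lm) \<le> (\<integral>x. lk_integrand l x \<partial>Lm)"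
    using AE_levy_measure_neg lk_integrand_ge[OF _ l]
    by (intro integral_mono_AE integrable_levy_measure_min_sq integrable_lk_integrand l
        integrable_minus) (auto elim: AE_mp)
  then show ?thesis
    by simp
qed

lemma integrable_jumps_between:
  assumes \<delta>: "0 < \<delta>"
  shows "integrable Lm (\<lambda>x. \<bar>x\<bar> * indicator {-1<..-\<delta>} x)"
proof (rule Bochner_Integration.integrable_bound)
  show "integrable Lm (\<lambda>x. min 1 (x^2) / \<delta>)"
    using integrable_levy_measure_min_sq by simp
  show "(\<lambda>x. \<bar>x\<bar> * indicator {-1<..-\<delta>} x) \<in> borel_measurable Lm"
    by measurable
  show "AE x in Lm. norm (\<bar>x\<bar> * indicator {-1<..-\<delta>} x) \<le> norm (min 1 (x^2) / \<delta>)"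
  proof (rule AE_I2)
    fix x :: real
    show "norm (\<bar>x\<bar> * indicator {-1<..-\<delta>} x) \<le> norm (min 1 (x^2) / \<delta>)"
    proof (cases "-1 < x \<and> x \<le> -\<delta>")
      case True
      then have "x^2 \<le> 1"
        using \<delta> by (simp add: abs_square_le_1)
      moreover have "\<delta> * \<bar>x\<bar> \<le> \<bar>x\<bar> * \<bar>x\<bar>"
        using True \<delta> by (intro mult_right_mono) auto
      ultimately show ?thesis
        using True \<delta> by (simp add: indicator_def field_simps power2_eq_square)
    next
      case False
      then have "indicator {-1<..-\<delta>} x = (0::real)"
        by (simp add: indicator_def)
      then show ?thesis
        by simp
    qed
  qed
qed

text \<open>Monotone convergence as \<delta> \<down> 0: if these integrals stayed bounded, the jumps in
  (-1, 0) would have finite variation.\<close>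
lemma jumps_between_unbounded:
  assumes ubv: "\<not> integrable Lm (\<lambda>x. \<bar>x\<bar> * indicator {-1<..} x)"
  shows "\<exists>\<delta>. 0 < \<delta> \<and> \<delta> \<le> 1 \<and> K \<le> (\<integral>x. \<bar>x\<bar> * indicator {-1<..-\<delta>} x \<partial>Lm)"
proof (rule ccontr)
  assume "\<not> ?thesis"
  then have bounded: "(\<integral>x. \<bar>x\<bar> * indicator {-1<..-\<delta>} x \<partial>Lm) < K" if "0 < \<delta>" "\<delta> \<le> 1" for \<delta>
    using that by force
  define f where "f n x = \<bar>x\<bar> * indicator {-1<..-(1 / (real n + 1))} x" for n x
  define u where "u x = \<bar>x\<bar> * indicator {-1<..<0::real} x" for x
  have inv_pos: "0 < 1 / (real n + 1)" "1 / (real n + 1) \<le> 1" for n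
    by (auto simp: field_simps)
  have f_int: "integrable Lm (f n)" for n
    unfolding f_def using integrable_jumps_between[OF inv_pos(1)] .
  have f_mono: "f n x \<le> f m x" if "n \<le> m" for n m x
    unfolding f_def using mono_jumps_between that by (rule monoD)
  have f_lim: "(\<lambda>n. f n x) \<longlonglongrightarrow> u x" for x
    unfolding f_def u_def by (rule tendsto_jumps_between)
  have "incseq (\<lambda>n. \<integral>x. f n x \<partial>Lm)"
    by (intro monoI integral_mono f_int f_mono)
  moreover have "\<forall>n. (\<integral>x. f n x \<partial>Lm) \<le> K"
    using bounded[OF inv_pos] unfolding f_def by (auto intro: less_imp_le)
  ultimately obtain I where I: "(\<lambda>n. \<integral>x. f n x \<partial>Lm) \<longlonglongrightarrow> I"
    using incseq_convergent by blast
  have "AE x in Lm. mono (\<lambda>n. f n x)"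
    unfolding f_def using mono_jumps_between by simp
  moreover have "u \<in> borel_measurable Lm"
    unfolding u_def by measurable
  ultimately have "integrable Lm u"
    using integrable_monotone_convergence[OF f_int _ AE_I2[OF f_lim] I] by blast
  moreover have "AE x in Lm. u x = \<bar>x\<bar> * indicator {-1<..} x"
    using AE_levy_measure_neg by eventually_elim (simp add: u_def indicator_def)
  ultimately have "integrable Lm (\<lambda>x. \<bar>x\<bar> * indicator {-1<..} x)"
    using integrable_cong_AE[of u Lm "\<lambda>x. \<bar>x\<bar> * indicator {-1<..} x"] by simp
  with ubv show False ..
qed

lemma small_jumps_integral_small:
  assumes bv: "integrable Lm (\<lambda>x. \<bar>x\<bar> * indicator {-1<..} x)" and e: "0 < e"
  shows "\<exists>\<delta>. 0 < \<delta> \<and> \<delta> \<le> 1 \<and> (\<integral>x. \<bar>x\<bar> * indicator {-\<delta><..} x \<partial>Lm) \<le> e"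
proof -
  define s where "s n x = \<bar>x\<bar> * indicator {-(1 / (real n + 1))<..} x" for n x
  have inv_pos: "0 < 1 / (real n + 1)" "1 / (real n + 1) \<le> 1" for n
    by (auto simp: field_simps)
  have "(\<lambda>n. \<integral>x. s n x \<partial>Lm) \<longlonglongrightarrow> (\<integral>x. 0 \<partial>Lm)"
  proof (rule integral_dominated_convergence[where w="\<lambda>x. \<bar>x\<bar> * indicator {-1<..} x"])
    show "s n \<in> borel_measurable Lm" for n
      unfolding s_def by measurable
    show "AE x in Lm. norm (s n x) \<le> \<bar>x\<bar> * indicator {-1<..} x" for n
    proof (rule AE_I2)
      fix x :: real
      show "norm (s n x) \<le> \<bar>x\<bar> * indicator {-1<..} x"
      proof (cases "- (1 / (real n + 1)) < x")
        case True
        then have "- 1 < x"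
          using inv_pos(2)[of n] by linarith
        then show ?thesis
          using True unfolding s_def by (simp add: indicator_def)
      qed (simp add: s_def indicator_def)
    qed
    show "AE x in Lm. (\<lambda>n. s n x) \<longlonglongrightarrow> 0"
      using AE_levy_measure_neg
    proof eventually_elim
      fix x :: real
      assume "x < 0"
      have "\<forall>\<^sub>F n in sequentially. s n x = 0"
        using eventually_le_minus_inverse_Suc[OF \<open>x < 0\<close>]
        by (rule eventually_mono) (auto simp: s_def indicator_def)
      then show "(\<lambda>n. s n x) \<longlonglongrightarrow> 0"
        by (rule tendsto_eventually)
    qed
  qed (use bv in simp_all)
  then have "\<forall>\<^sub>F n in sequentially. (\<integral>x. s n x \<partial>Lm) < e"
    using e by (simp add: order_tendstoD(2))
  then obtain n where "(\<integral>x. s n x \<partial>Lm) < e"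
    by (auto simp: eventually_sequentially)
  then show ?thesis
    using inv_pos[of n] unfolding s_def by (intro exI[of _ "1 / (real n + 1)"]) auto
qed

lemma laplace_exp_lower_bound_gaussian:
  assumes "\<sigma> \<noteq> 0"
  shows "\<forall>\<^sub>F l in at_top. l - (\<integral>x. min 1 (x^2) \<partial>Lm) \<le> laplace_exp \<gamma> \<sigma> Lm l"
proof (rule eventually_at_top_linorderI)
  define s where "s = \<sigma>^2 / 2"
  have s: "0 < s"
    using assms unfolding s_def by simp
  fix l
  assume l: "max 1 ((\<bar>\<gamma>\<bar> + 1) / s) \<le> l"
  then have "\<bar>\<gamma>\<bar> + 1 \<le> s * l"
    using s by (simp add: pos_divide_le_eq mult.commute)
  then have "(\<bar>\<gamma>\<bar> + 1) * l \<le> s * l^2"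
    using l mult_right_mono[of "\<bar>\<gamma>\<bar> + 1" "s * l" l] by (simp add: power2_eq_square mult.assoc)
  moreover have "- \<bar>\<gamma>\<bar> * l \<le> \<gamma> * l"
    using l mult_right_mono[of "- \<bar>\<gamma>\<bar>" \<gamma> l] by simp
  moreover have "- (\<integral>x. min 1 (x^2) \<partial>Lm) \<le> (\<integral>x. lk_integrand l x \<partial>Lm)"
    using l integral_lk_integrand_ge by simp
  ultimately show "l - (\<integral>x. min 1 (x^2) \<partial>Lm) \<le> laplace_exp \<gamma> \<sigma> Lm l"
    unfolding laplace_exp_eq_lk_integrand s_def by (simp add: algebra_simps)
qed

lemma laplace_exp_lower_bound_unbounded_variation:
  assumes "\<not> integrable Lm (\<lambda>x. \<bar>x\<bar> * indicator {-1<..} x)"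
  shows "\<forall>\<^sub>F l in at_top. l - (\<integral>x. min 1 (x^2) \<partial>Lm) \<le> laplace_exp \<gamma> \<sigma> Lm l"
proof -
  define A where "A \<delta> = (\<integral>x. \<bar>x\<bar> * indicator {-1<..-\<delta>} x \<partial>Lm)" for \<delta>
  obtain \<delta> where \<delta>: "0 < \<delta>" "\<delta> \<le> 1" "2 * (\<bar>\<gamma>\<bar> + 1) \<le> A \<delta>"
    using jumps_between_unbounded[OF assms] unfolding A_def by blast
  show ?thesis
  proof (rule eventually_at_top_linorderI)
    fix l
    assume l: "max 1 (2 / \<delta>) \<le> l"
    have l1: "1 \<le> l"
      using l by simp
    have l\<delta>: "2 \<le> l * \<delta>"
      using l \<delta> by (simp add: pos_divide_le_eq)
    have "(\<integral>x. l / 2 * (\<bar>x\<bar> * indicator {-1<..-\<delta>} x) - min 1 (x^2) \<partial>Lm)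
        \<le> (\<integral>x. lk_integrand l x \<partial>Lm)"
      using AE_levy_measure_neg lk_integrand_ge_jumps_below[OF _ \<delta>(1) l\<delta>] l1
      by (intro integral_mono_AE Bochner_Integration.integrable_diff integrable_mult_right
          integrable_jumps_between \<delta>(1) integrable_levy_measure_min_sq integrable_lk_integrand)
        (auto elim: AE_mp)
    then have lk: "l / 2 * A \<delta> - (\<integral>x. min 1 (x^2) \<partial>Lm) \<le> (\<integral>x. lk_integrand l x \<partial>Lm)"
      unfolding A_def using integrable_jumps_between[OF \<delta>(1)] integrable_levy_measure_min_sq
      by (simp add: Bochner_Integration.integral_diff)
    have "l - (\<integral>x. min 1 (x^2) \<partial>Lm) \<le> l / 2 * A \<delta> - \<bar>\<gamma>\<bar> * l - (\<integral>x. min 1 (x^2) \<partial>Lm)"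
      using mult_left_mono[OF \<delta>(3), of "l / 2"] l1 by (simp add: algebra_simps)
    also have "\<dots> \<le> \<gamma> * l + (\<integral>x. lk_integrand l x \<partial>Lm)"
      using lk mult_right_mono[OF abs_ge_minus_self[of \<gamma>], of l] l1 by simp
    also have "\<dots> \<le> laplace_exp \<gamma> \<sigma> Lm l"
      unfolding laplace_exp_eq_lk_integrand by simp
    finally show "l - (\<integral>x. min 1 (x^2) \<partial>Lm) \<le> laplace_exp \<gamma> \<sigma> Lm l" .
  qed
qed

lemma laplace_exp_lower_bound_bounded_variation:
  assumes bv: "integrable Lm (\<lambda>x. \<bar>x\<bar> * indicator {-1<..} x)"
    and drift: "0 < \<gamma> + (\<integral>x. \<bar>x\<bar> * indicator {-1<..} x \<partial>Lm)"
  defines "d \<equiv> \<gamma> + (\<integral>x. \<bar>x\<bar> * indicator {-1<..} x \<partial>Lm)"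
  shows "\<exists>\<delta>>0. \<forall>l\<ge>0. d / 2 * l - (\<integral>x. min 1 (x^2) \<partial>Lm) / \<delta>^2 \<le> laplace_exp \<gamma> \<sigma> Lm l"
proof -
  define B where "B \<delta> = (\<integral>x. \<bar>x\<bar> * indicator {-\<delta><..} x \<partial>Lm)" for \<delta>
  have B_int: "integrable Lm (\<lambda>x. \<bar>x\<bar> * indicator {-\<delta><..} x)" if "\<delta> \<le> 1" for \<delta>
  proof (rule Bochner_Integration.integrable_bound[OF bv])
    show "AE x in Lm. norm (\<bar>x\<bar> * indicator {-\<delta><..} x) \<le> norm (\<bar>x\<bar> * indicator {-1<..} x)"
      using that by (intro AE_I2) (auto simp: indicator_def)
  qed measurable
  obtain \<delta> where \<delta>: "0 < \<delta>" "\<delta> \<le> 1" "B \<delta> \<le> d / 2"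
    using small_jumps_integral_small[OF bv, of "d / 2"] drift unfolding B_def d_def by auto
  have "d / 2 * l - (\<integral>x. min 1 (x^2) \<partial>Lm) / \<delta>^2 \<le> laplace_exp \<gamma> \<sigma> Lm l" if l: "0 \<le> l" for l
  proof -
    have "(\<integral>x. l * (\<bar>x\<bar> * indicator {-1<..} x) - l * (\<bar>x\<bar> * indicator {-\<delta><..} x)
          - min 1 (x^2) / \<delta>^2 \<partial>Lm) \<le> (\<integral>x. lk_integrand l x \<partial>Lm)"
      using AE_levy_measure_neg lk_integrand_ge_jumps_above[OF _ \<delta>(1,2) l]
      by (intro integral_mono_AE Bochner_Integration.integrable_diff integrable_mult_right
          integrable_divide bv B_int \<delta>(2) integrable_levy_measure_min_sq integrable_lk_integrand l)
        (auto elim: AE_mp)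
    then have lk: "l * (d - \<gamma>) - l * B \<delta> - (\<integral>x. min 1 (x^2) \<partial>Lm) / \<delta>^2
        \<le> (\<integral>x. lk_integrand l x \<partial>Lm)"
      unfolding B_def d_def using bv B_int[OF \<delta>(2)] integrable_levy_measure_min_sq
      by (simp add: Bochner_Integration.integral_diff)
    have "d / 2 * l - (\<integral>x. min 1 (x^2) \<partial>Lm) / \<delta>^2
        \<le> l * (d - \<gamma>) - l * B \<delta> - (\<integral>x. min 1 (x^2) \<partial>Lm) / \<delta>^2 + \<gamma> * l"
      using mult_left_mono[OF \<delta>(3) l] by (simp add: algebra_simps)
    also have "\<dots> \<le> \<gamma> * l + (\<integral>x. lk_integrand l x \<partial>Lm)"
      using lk by simp
    also have "\<dots> \<le> laplace_exp \<gamma> \<sigma> Lm l"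
      unfolding laplace_exp_eq_lk_integrand by simp
    finally show ?thesis .
  qed
  then show ?thesis
    using \<delta>(1) by blast
qed

lemma filterlim_laplace_exp_at_top:
  assumes "sn_not_monotone \<gamma> \<sigma> Lm"
  shows "filterlim (laplace_exp \<gamma> \<sigma> Lm) at_top at_top"
proof -
  define M where "M = (\<integral>x. min 1 (x^2) \<partial>Lm)"
  have "\<exists>a>0. \<exists>b. \<forall>\<^sub>F l in at_top. a * l - b \<le> laplace_exp \<gamma> \<sigma> Lm l"
  proof (cases "\<sigma> \<noteq> 0 \<or> \<not> integrable Lm (\<lambda>x. \<bar>x\<bar> * indicator {-1<..} x)")
    case True
    then have "\<forall>\<^sub>F l in at_top. 1 * l - M \<le> laplace_exp \<gamma> \<sigma> Lm l"
      using laplace_exp_lower_bound_gaussian laplace_exp_lower_bound_unbounded_variation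
      unfolding M_def by auto
    then show ?thesis
      using zero_less_one by blast
  next
    case False
    define d where "d = \<gamma> + (\<integral>x. \<bar>x\<bar> * indicator {-1<..} x \<partial>Lm)"
    have bv: "integrable Lm (\<lambda>x. \<bar>x\<bar> * indicator {-1<..} x)" and d: "0 < d"
      using False assms unfolding sn_not_monotone_def d_def by auto
    obtain \<delta> where "\<forall>l\<ge>0. d / 2 * l - M / \<delta>^2 \<le> laplace_exp \<gamma> \<sigma> Lm l"
      using laplace_exp_lower_bound_bounded_variation[OF bv d[unfolded d_def]]
      unfolding M_def d_def by blast
    then have "\<forall>\<^sub>F l in at_top. d / 2 * l - M / \<delta>^2 \<le> laplace_exp \<gamma> \<sigma> Lm l"
      by (intro eventually_at_top_linorderI[of 0]) blast
    then show ?thesis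
      using d by (intro exI[of _ "d / 2"] exI[of _ "M / \<delta>^2"] conjI) simp_all
  qed
  then obtain a b where a: "0 < a" and bound: "\<forall>\<^sub>F l in at_top. a * l - b \<le> laplace_exp \<gamma> \<sigma> Lm l"
    by blast
  have "filterlim (\<lambda>l. - b + a * l) at_top at_top"
    by (rule filterlim_tendsto_add_at_top[OF tendsto_const
          filterlim_tendsto_pos_mult_at_top[OF tendsto_const a filterlim_ident]])
  moreover have "\<forall>\<^sub>F l in at_top. - b + a * l \<le> laplace_exp \<gamma> \<sigma> Lm l"
    using bound by simp
  ultimately show ?thesis
    by (rule filterlim_at_top_mono)
qed

end

section \<open>Scale functions and the function HH\<close>

lemma interval_lebesgue_integrable_bounded:
  fixes k :: "real \<Rightarrow> real"
  assumes [measurable]: "k \<in> borel_measurable borel" and B: "\<And>y. y \<in> {m..M} \<Longrightarrow> \<bar>k y\<bar> \<le> B"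
    and "m \<le> M"
  shows "interval_lebesgue_integrable lborel (ereal m) (ereal M) k"
proof -
  have "set_integrable lborel {m..M} k"
    unfolding set_integrable_def using B emeasure_lborel_cbox_finite[of m M]
    by (intro integrableI_bounded_set_indicator) (auto simp: less_top[symmetric])
  then show ?thesis
    unfolding interval_lebesgue_integrable_def using \<open>m \<le> M\<close>
    by (auto intro: set_integrable_subset simp: einterval_iff)
qed

lemma
  fixes f :: "real \<Rightarrow> real"
  assumes [measurable]: "f \<in> borel_measurable borel"
  shows interval_lebesgue_integrable_0_infty_iff:
      "interval_lebesgue_integrable lborel 0 \<infinity> f \<longleftrightarrow> set_integrable lborel {0..} f"
    and interval_lebesgue_integral_0_infty_eq:
      "interval_lebesgue_integral lborel 0 \<infinity> f = (LINT x:{0..}|lborel. f x)"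
proof -
  have ae: "AE x in lborel. indicator {0<..} x *\<^sub>R f x = indicator {0..} x *\<^sub>R f x"
    using AE_lborel_singleton[of "0::real"] by eventually_elim (auto simp: indicator_def)
  show "interval_lebesgue_integrable lborel 0 \<infinity> f \<longleftrightarrow> set_integrable lborel {0..} f"
    unfolding interval_lebesgue_integral_0_infty set_integrable_def
    by (rule integrable_cong_AE) (use ae in auto)
  show "interval_lebesgue_integral lborel 0 \<infinity> f = (LINT x:{0..}|lborel. f x)"
    unfolding interval_lebesgue_integral_0_infty set_lebesgue_integral_def
    by (rule integral_cong_AE) (use ae in auto)
qed

context
  fixes \<psi> :: "real \<Rightarrow> real" and W :: "real \<Rightarrow> real \<Rightarrow> real" and r :: real
  assumes scale: "is_scale_family \<psi> W" and r: "0 \<le> r"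
begin

lemma scale_function_neg: "y < 0 \<Longrightarrow> W r y = 0"
  using scale r unfolding is_scale_family_def by blast

lemma scale_function_continuous: "continuous_on {0..} (W r)"
  using scale r unfolding is_scale_family_def by blast

lemma scale_function_measurable: "W r \<in> borel_measurable borel"
proof -
  have "(\<lambda>y. indicator {0..} y *\<^sub>R W r y) \<in> borel_measurable borel"
    by (intro borel_measurable_continuous_on_indicator scale_function_continuous) auto
  moreover have "(\<lambda>y. indicator {0..} y *\<^sub>R W r y) = W r"
    by (auto simp: fun_eq_iff indicator_def scale_function_neg)
  ultimately show ?thesis
    by simp
qed

lemma
  assumes "Phi \<psi> r < l"
  shows laplace_integrable_scale_function: "laplace_integrable (W r) l"
    and laplace_scale_function: "laplace (W r) l = 1 / (\<psi> l - r)"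
proof -
  have [measurable]: "(\<lambda>y. exp (- l * y) * W r y) \<in> borel_measurable borel"
    using scale_function_measurable by measurable
  have "interval_lebesgue_integrable lborel 0 \<infinity> (\<lambda>y. exp (- l * y) * W r y) \<and>
      (LBINT y=0..\<infinity>. exp (- l * y) * W r y) = 1 / (\<psi> l - r)"
    using scale r assms unfolding is_scale_family_def by blast
  then show "laplace_integrable (W r) l" "laplace (W r) l = 1 / (\<psi> l - r)"
    unfolding laplace_integrable_def laplace_def interval_lebesgue_integrable_0_infty_iff[OF \<open>_ \<in> _\<close>]
      interval_lebesgue_integral_0_infty_eq[OF \<open>_ \<in> _\<close>] by auto
qed

end

lemma interval_integral_exp_mult_shift:
  "(LBINT z=ereal 0..ereal x. exp (c * (x - z)) * w z) = exp (c * x) * (LBINT z=ereal 0..ereal x. exp (- c * z) * w z)"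
proof -
  have "(LBINT z=ereal 0..ereal x. exp (c * (x - z)) * w z)
      = (LBINT z=ereal 0..ereal x. exp (c * x) * (exp (- c * z) * w z))"
    by (rule interval_integral_cong) (simp add: exp_add[symmetric] algebra_simps)
  then show ?thesis
    by simp
qed

lemma HH_eq_conv:
  assumes "0 \<le> x"
  shows "HH \<psi> W p q x = exp (Phi \<psi> p * x) + q * conv (\<lambda>u. exp (Phi \<psi> p * u)) (W (p + q)) x"
  unfolding HH_def conv_def interval_integral_Icc[OF assms, symmetric] interval_integral_exp_mult_shift
  by (simp add: algebra_simps)

lemma continuous_HH:
  assumes scale: "is_scale_family \<psi> W" and pq: "0 \<le> p + q"
  shows "continuous_on UNIV (HH \<psi> W p q)"
proof -
  have "continuous_on UNIV (\<lambda>x. LBINT z=ereal 0..ereal x. exp (- Phi \<psi> p * z) * W (p + q) z)"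
    using scale_function_continuous[OF scale pq] scale_function_neg[OF scale pq]
    by (intro continuous_on_interval_integral_0 continuous_intros) auto
  then show ?thesis
    unfolding HH_def[abs_def] by (intro continuous_intros)
qed

lemma
  assumes scale: "is_scale_family \<psi> W" and pq: "0 \<le> p + q"
    and l: "Phi \<psi> p < l" "Phi \<psi> (p + q) < l"
  shows laplace_integrable_HH: "laplace_integrable (HH \<psi> W p q) l"
    and laplace_HH: "laplace (HH \<psi> W p q) l = 1 / (l - Phi \<psi> p) * (1 + q / (\<psi> l - (p + q)))"
proof -
  let ?E = "\<lambda>u. exp (Phi \<psi> p * u)" and ?C = "conv (\<lambda>u. exp (Phi \<psi> p * u)) (W (p + q))"
  have E_meas: "?E \<in> borel_measurable borel"
    by measurable
  note W_meas = scale_function_measurable[OF scale pq]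
  note E = laplace_integrable_exp[OF l(1)] laplace_exp[OF l(1)]
  note Wr = laplace_integrable_scale_function[OF scale pq l(2)] laplace_scale_function[OF scale pq l(2)]
  have C_int: "laplace_integrable ?C l"
    by (rule laplace_integrable_conv[OF E_meas W_meas E(1) Wr(1)])
  have C: "laplace ?C l = 1 / (l - Phi \<psi> p) * (1 / (\<psi> l - (p + q)))"
    using laplace_conv[OF E_meas W_meas E(1) Wr(1)] by (simp only: E(2) Wr(2))
  have H: "HH \<psi> W p q x = ?E x + q * ?C x" if "0 \<le> x" for x
    using HH_eq_conv[OF that] .
  have "laplace_integrable (HH \<psi> W p q) l \<longleftrightarrow> laplace_integrable (\<lambda>x. ?E x + q * ?C x) l"
    by (rule laplace_integrable_cong) (rule H)
  then show "laplace_integrable (HH \<psi> W p q) l"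
    using laplace_integrable_lincomb[OF E(1) C_int] by simp
  have "laplace (HH \<psi> W p q) l = laplace (\<lambda>x. ?E x + q * ?C x) l"
    by (rule laplace_cong[OF H])
  also have "\<dots> = 1 / (l - Phi \<psi> p) + q * (1 / (l - Phi \<psi> p) * (1 / (\<psi> l - (p + q))))"
    unfolding laplace_lincomb[OF E(1) C_int] E(2) C ..
  also have "\<dots> = 1 / (l - Phi \<psi> p) * (1 + q / (\<psi> l - (p + q)))"
    by (simp add: distrib_left divide_inverse mult_ac)
  finally show "laplace (HH \<psi> W p q) l = 1 / (l - Phi \<psi> p) * (1 + q / (\<psi> l - (p + q)))" .
qed

lemma laplace_conv_scale_function_HH:
  assumes scale: "is_scale_family \<psi> W" and p: "0 \<le> p" and pq: "0 \<le> p + q"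
    and l\<Phi>: "Phi \<psi> p < l" "Phi \<psi> (p + q) < l" and \<psi>l: "\<psi> l \<noteq> p" "\<psi> l \<noteq> p + q"
  shows "laplace_integrable (conv (W p) (HH \<psi> W p q)) l"
    and "laplace_integrable (conv (\<lambda>u. exp (Phi \<psi> p * u)) (W (p + q))) l"
    and "laplace (conv (W p) (HH \<psi> W p q)) l = laplace (conv (\<lambda>u. exp (Phi \<psi> p * u)) (W (p + q))) l"
proof -
  let ?\<Phi> = "Phi \<psi> p" and ?H = "HH \<psi> W p q" and ?E = "\<lambda>u. exp (Phi \<psi> p * u)"
  note Wp_meas = scale_function_measurable[OF scale p]
  note Wr_meas = scale_function_measurable[OF scale pq]
  have E_meas: "?E \<in> borel_measurable borel"
    by measurable
  have H_meas: "?H \<in> borel_measurable borel"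
    using continuous_HH[OF scale pq] by (rule borel_measurable_continuous_onI)
  note E = laplace_integrable_exp[OF l\<Phi>(1)] laplace_exp[OF l\<Phi>(1)]
  note Wp = laplace_integrable_scale_function[OF scale p l\<Phi>(1)]
    laplace_scale_function[OF scale p l\<Phi>(1)]
  note Wr = laplace_integrable_scale_function[OF scale pq l\<Phi>(2)]
    laplace_scale_function[OF scale pq l\<Phi>(2)]
  note H = laplace_integrable_HH[OF scale pq l\<Phi>] laplace_HH[OF scale pq l\<Phi>]
  show "laplace_integrable (conv (W p) ?H) l"
    by (rule laplace_integrable_conv[OF Wp_meas H_meas Wp(1) H(1)])
  show "laplace_integrable (conv ?E (W (p + q))) l"
    by (rule laplace_integrable_conv[OF E_meas Wr_meas E(1) Wr(1)])
  have "laplace (conv (W p) ?H) l = 1 / (\<psi> l - p) * (1 / (l - ?\<Phi>) * (1 + q / (\<psi> l - (p + q))))"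
    using laplace_conv[OF Wp_meas H_meas Wp(1) H(1)] by (simp only: Wp(2) H(2))
  also have "\<dots> = 1 / (l - ?\<Phi>) * (1 / (\<psi> l - (p + q)))"
    using \<psi>l l\<Phi> by (simp add: field_simps)
  also have "\<dots> = laplace (conv ?E (W (p + q))) l"
    using laplace_conv[OF E_meas Wr_meas E(1) Wr(1)] by (simp only: E(2) Wr(2))
  finally show "laplace (conv (W p) ?H) l = laplace (conv ?E (W (p + q))) l" .
qed

lemma interval_lebesgue_integrable_scale_function_HH:
  assumes scale: "is_scale_family \<psi> W" and p: "0 \<le> p" and pq: "0 \<le> p + q" and "m \<le> M"
  shows "interval_lebesgue_integrable lborel (ereal m) (ereal M) (\<lambda>y. W p (x - y) * HH \<psi> W p q y)"
proof -
  have meas: "(\<lambda>y. W p (x - y) * HH \<psi> W p q y) \<in> borel_measurable borel"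
    using scale_function_measurable[OF scale p]
      borel_measurable_continuous_onI[OF continuous_HH[OF scale pq]] by measurable
  obtain BW where BW: "\<And>y. y \<in> {0..x - m} \<Longrightarrow> \<bar>W p y\<bar> \<le> BW"
    using compact_imp_bounded[OF compact_continuous_image[OF
        continuous_on_subset[OF scale_function_continuous[OF scale p]] compact_Icc, of 0 "x - m"]]
    unfolding bounded_iff by fastforce
  obtain BH where BH: "\<And>y. y \<in> {m..M} \<Longrightarrow> \<bar>HH \<psi> W p q y\<bar> \<le> BH"
    using compact_imp_bounded[OF compact_continuous_image[OF
        continuous_on_subset[OF continuous_HH[OF scale pq]] compact_Icc, of m M]]
    unfolding bounded_iff by fastforce
  have "\<bar>W p (x - y) * HH \<psi> W p q y\<bar> \<le> \<bar>BW\<bar> * \<bar>BH\<bar>" if y: "y \<in> {m..M}" for y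
  proof -
    have "\<bar>W p (x - y)\<bar> \<le> \<bar>BW\<bar>"
    proof (cases "x - y < 0")
      case False
      then have "x - y \<in> {0..x - m}"
        using y by auto
      then show ?thesis
        using BW by fastforce
    qed (simp add: scale_function_neg[OF scale p])
    moreover have "\<bar>HH \<psi> W p q y\<bar> \<le> \<bar>BH\<bar>"
      using BH[OF y] by simp
    ultimately show ?thesis
      unfolding abs_mult by (intro mult_mono) auto
  qed
  then show ?thesis
    by (rule interval_lebesgue_integrable_bounded[OF meas _ \<open>m \<le> M\<close>])
qed

context
  fixes \<psi> :: "real \<Rightarrow> real" and W :: "real \<Rightarrow> real \<Rightarrow> real" and p q :: real
  assumes scale: "is_scale_family \<psi> W" and psi_at_top: "filterlim \<psi> at_top at_top"
    and p: "0 \<le> p" and pq: "0 \<le> p + q"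
begin

lemma conv_scale_function_HH:
  assumes x: "0 < x"
  shows "conv (W p) (HH \<psi> W p q) x = conv (\<lambda>u. exp (Phi \<psi> p * u)) (W (p + q)) x"
proof -
  have "\<forall>\<^sub>F l in at_top. max p (p + q) < \<psi> l"
    using psi_at_top unfolding filterlim_at_top_dense by blast
  then obtain L where L: "\<And>l. L \<le> l \<Longrightarrow> max p (p + q) < \<psi> l"
    unfolding eventually_at_top_linorder by blast
  \<comment> \<open>\<psi> l \<noteq> p, p + q keeps the junk value 1 / 0 out of the transforms of the scale functions\<close>
  define l0 where "l0 = max L (max (Phi \<psi> p) (Phi \<psi> (p + q))) + 1"
  have l0: "max L (max (Phi \<psi> p) (Phi \<psi> (p + q))) < l0 + n" for n :: nat
    unfolding l0_def using of_nat_0_le_iff[of n] by linarith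
  have "Phi \<psi> p < l0 + n" "Phi \<psi> (p + q) < l0 + n" "\<psi> (l0 + n) \<noteq> p" "\<psi> (l0 + n) \<noteq> p + q"
    for n :: nat
    using l0[of n] L[of "l0 + n"] by auto
  note transforms = laplace_conv_scale_function_HH[OF scale p pq this]
  have "continuous_on {0..} (HH \<psi> W p q)"
    using continuous_HH[OF scale pq] by (rule continuous_on_subset) simp
  then have "continuous_on {0..} (conv (W p) (HH \<psi> W p q))"
    by (rule continuous_on_conv[OF scale_function_continuous[OF scale p]])
  moreover have "continuous_on {0..} (conv (\<lambda>u. exp (Phi \<psi> p * u)) (W (p + q)))"
    by (intro continuous_on_conv continuous_intros scale_function_continuous[OF scale pq])
  ultimately show ?thesis
    using laplace_unique[OF _ _ transforms x] by blast
qed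

lemma interval_integral_scale_function_HH:
  "(LBINT z=ereal 0..ereal x. W p (x - z) * HH \<psi> W p q z)
    = (LBINT z=ereal 0..ereal x. exp (Phi \<psi> p * (x - z)) * W (p + q) z)"
proof (cases "0 < x")
  case True
  then show ?thesis
    using conv_scale_function_HH[OF True] unfolding conv_def interval_integral_Icc[OF less_imp_le[OF True]]
    by simp
next
  case False
  then consider "x = 0" | "x < 0"
    by linarith
  then show ?thesis
  proof cases
    case 2
    have "(LBINT z=ereal 0..ereal x. W p (x - z) * HH \<psi> W p q z) = (LBINT z=ereal 0..ereal x. 0)"
      by (rule interval_integral_cong)
        (use 2 in \<open>auto simp: einterval_iff min_def max_def scale_function_neg[OF scale p]\<close>)
    moreover have "(LBINT z=ereal 0..ereal x. exp (Phi \<psi> p * (x - z)) * W (p + q) z)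
        = (LBINT z=ereal 0..ereal x. 0)"
      by (rule interval_integral_cong)
        (use 2 in \<open>auto simp: einterval_iff min_def max_def scale_function_neg[OF scale pq]\<close>)
    ultimately show ?thesis
      by simp
  qed simp
qed

lemma HH_eq_interval_integral:
  "HH \<psi> W p q x = exp (Phi \<psi> p * x) + q * (LBINT y=ereal 0..ereal x. W p (x - y) * HH \<psi> W p q y)"
  unfolding interval_integral_scale_function_HH interval_integral_exp_mult_shift
  by (simp add: HH_def algebra_simps)

lemma HH_renewal:
  "HH \<psi> W p q x - q * (LBINT y=ereal a..ereal x. W p (x - y) * HH \<psi> W p q y)
    = exp (Phi \<psi> p * x) + q * (LBINT y=ereal 0..ereal a. W p (x - y) * HH \<psi> W p q y)"
proof -
  define k where "k y = W p (x - y) * HH \<psi> W p q y" for y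
  define m M where "m = min 0 (min a x)" and "M = max 0 (max a x)"
  have "interval_lebesgue_integrable lborel (ereal m) (ereal M) k"
    unfolding k_def m_def M_def by (intro interval_lebesgue_integrable_scale_function_HH scale p pq) auto
  moreover have "min (ereal 0) (min (ereal a) (ereal x)) = ereal m"
    "max (ereal 0) (max (ereal a) (ereal x)) = ereal M"
    unfolding m_def M_def by (auto simp: min_def max_def)
  ultimately have "(LBINT y=ereal 0..ereal a. k y) + (LBINT y=ereal a..ereal x. k y)
      = (LBINT y=ereal 0..ereal x. k y)"
    by (intro interval_integral_sum) simp
  then have "HH \<psi> W p q x
      = exp (Phi \<psi> p * x) + q * ((LBINT y=ereal 0..ereal a. k y) + (LBINT y=ereal a..ereal x. k y))"
    using HH_eq_interval_integral[of x] unfolding k_def by simp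
  then show ?thesis
    unfolding k_def by (simp add: algebra_simps)
qed

end

theorem mainTheorem9:
  fixes \<gamma> \<sigma> :: real and Lm :: "real measure" and W :: "real \<Rightarrow> real \<Rightarrow> real"
    and p q :: real
  assumes "levy_measure_sn Lm"
    and "sn_not_monotone \<gamma> \<sigma> Lm"
    and "is_scale_family (laplace_exp \<gamma> \<sigma> Lm) W"
    and "p \<ge> 0" and "p + q \<ge> 0"
  shows "(\<forall>x::real.
           (LBINT z=ereal 0..ereal x. W p (x - z) * HH (laplace_exp \<gamma> \<sigma> Lm) W p q z) =
           (LBINT z=ereal 0..ereal x. exp (Phi (laplace_exp \<gamma> \<sigma> Lm) p * (x - z)) * W (p + q) z))
       \<and> (\<forall>a x::real.
           HH (laplace_exp \<gamma> \<sigma> Lm) W p q x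
             - q * (LBINT y=ereal a..ereal x. W p (x - y) * HH (laplace_exp \<gamma> \<sigma> Lm) W p q y) =
           exp (Phi (laplace_exp \<gamma> \<sigma> Lm) p * x)
             + q * (LBINT y=ereal 0..ereal a. W p (x - y) * HH (laplace_exp \<gamma> \<sigma> Lm) W p q y))"
proof -
  have "filterlim (laplace_exp \<gamma> \<sigma> Lm) at_top at_top"
    using filterlim_laplace_exp_at_top[OF assms(1,2)] .
  then show ?thesis
    using interval_integral_scale_function_HH[OF assms(3) _ assms(4,5)]
      HH_renewal[OF assms(3) _ assms(4,5)] by blast
qed

end
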